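(* Let $A,B,X$ be finite-dimensional real inner product spaces and $\alpha:A\to X$, $\beta:B\to X$ Riemannian submersions. Then there exists an inner product on the fiber product $C=A\times_{\alpha,\beta}B=\{(a,b)\in A\times B:\alpha(a)=\beta(b)\}$ such that both projections $\pi_A:C\to A$ and $\pi_B:C\to B$ are Riemannian submersions.
   Context: A linear surjection $T:E\to F$ between finite-dimensional inner product spaces is a Riemannian submersion if its restriction to $(\ker T)^\perp$ is an isometry onto $F$. *)

theory Defs
  imports "HOL-Analysis.Analysis"
begin

definition inner_product_on :: "'v::real_vector set \<Rightarrow> ('v \<Rightarrow> 'v \<Rightarrow> real) \<Rightarrow> bool" where
  "inner_product_on S g \<longleftrightarrow>
     subspace S \<and>
     (\<forall>x\<in>S. \<forall>y\<in>S. g x y = g y x) \<and>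
     (\<forall>x\<in>S. \<forall>y\<in>S. \<forall>z\<in>S. g (x + y) z = g x z + g y z) \<and>
     (\<forall>c. \<forall>x\<in>S. \<forall>y\<in>S. g (c *\<^sub>R x) y = c * g x y) \<and>
     (\<forall>x\<in>S. x \<noteq> 0 \<longrightarrow> g x x > 0)"

definition riemannian_submersion_on ::
  "'v::real_vector set \<Rightarrow> ('v \<Rightarrow> 'v \<Rightarrow> real) \<Rightarrow> 'w::real_vector set \<Rightarrow> ('w \<Rightarrow> 'w \<Rightarrow> real)
     \<Rightarrow> ('v \<Rightarrow> 'w) \<Rightarrow> bool" where
  "riemannian_submersion_on E g F h T \<longleftrightarrow>
     (\<forall>x\<in>E. \<forall>y\<in>E. T (x + y) = T x + T y) \<and>
     (\<forall>c. \<forall>x\<in>E. T (c *\<^sub>R x) = c *\<^sub>R T x) \<and>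
     T ` E = F \<and>
     (let K = {k\<in>E. T k = 0}; P = {v\<in>E. \<forall>k\<in>K. g v k = 0} in
        T ` P = F \<and> (\<forall>v\<in>P. \<forall>w\<in>P. h (T v) (T w) = g v w))"

end

theory Submission
  imports Defs
begin

text \<open>On the fiber product C the vectors (a, b) satisfy \<alpha> a = \<beta> b =: x, and we give (a, b)
  the squared length |a|^2 + |b|^2 - |x|^2. It is positive definite because a Riemannian
  submersion does not increase lengths. A vector of C that is orthogonal to the kernel
  {(0, k). \<beta> k = 0} of the first projection has its second component b horizontal for \<beta>,
  so |b| = |x| and its squared length is just |a|^2; horizontal lifts for \<beta> show that
  every a is hit. The second projection is handled by the same argument after swapping
  the factors, since the metric is symmetric in \<alpha> and \<beta> on C.\<close>

lemma riemannian_submersion_on_cong: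
  assumes "\<forall>x\<in>E. \<forall>y\<in>E. g x y = g' x y"
  shows "riemannian_submersion_on E g F h T \<longleftrightarrow> riemannian_submersion_on E g' F h T"
proof -
  have "{v\<in>E. \<forall>k\<in>{k\<in>E. T k = 0}. g v k = 0} = {v\<in>E. \<forall>k\<in>{k\<in>E. T k = 0}. g' v k = 0}"
    using assms by auto
  then show ?thesis
    using assms unfolding riemannian_submersion_on_def Let_def by auto
qed

lemma riemannian_submersion_on_comp_linear_onto:
  assumes "linear \<phi>" and \<phi>E: "\<phi> ` E' = E" and "riemannian_submersion_on E g F h T"
  shows "riemannian_submersion_on E' (\<lambda>x y. g (\<phi> x) (\<phi> y)) F h (T \<circ> \<phi>)"
proof -
  define K where "K = {k\<in>E. T k = 0}"
  define P where "P = {v\<in>E. \<forall>k\<in>K. g v k = 0}"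
  define K' where "K' = {k\<in>E'. (T \<circ> \<phi>) k = 0}"
  define P' where "P' = {v\<in>E'. \<forall>k\<in>K'. g (\<phi> v) (\<phi> k) = 0}"
  have "\<phi> ` K' = K"
    using \<phi>E unfolding K_def K'_def by auto
  then have P': "P' = {v\<in>E'. \<phi> v \<in> P}"
    using \<phi>E unfolding P_def P'_def by auto
  then have "\<phi> ` P' = P"
    using \<phi>E unfolding P_def by auto
  have T: "T ` P = F" "\<forall>v\<in>P. \<forall>w\<in>P. h (T v) (T w) = g v w"
      "\<forall>x\<in>E. \<forall>y\<in>E. T (x + y) = T x + T y" "\<forall>c. \<forall>x\<in>E. T (c *\<^sub>R x) = c *\<^sub>R T x" "T ` E = F"
    using assms(3) unfolding riemannian_submersion_on_def Let_def K_def P_def by auto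
  have "(T \<circ> \<phi>) ` P' = F" "(T \<circ> \<phi>) ` E' = F"
    using \<open>\<phi> ` P' = P\<close> \<phi>E T(1,5) by (metis image_comp)+
  moreover have "\<forall>v\<in>P'. \<forall>w\<in>P'. h ((T \<circ> \<phi>) v) ((T \<circ> \<phi>) w) = g (\<phi> v) (\<phi> w)"
    using P' T(2) by simp
  moreover have "\<forall>x\<in>E'. \<forall>y\<in>E'. (T \<circ> \<phi>) (x + y) = (T \<circ> \<phi>) x + (T \<circ> \<phi>) y"
      "\<forall>c. \<forall>x\<in>E'. (T \<circ> \<phi>) (c *\<^sub>R x) = c *\<^sub>R (T \<circ> \<phi>) x"
    using \<phi>E T(3,4) by (auto simp: linear_add[OF assms(1)] linear_scale[OF assms(1)])
  ultimately show ?thesis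
    unfolding riemannian_submersion_on_def Let_def K'_def[symmetric] P'_def[symmetric] by blast
qed

lemma riemannian_submersion_linear:
  assumes "riemannian_submersion_on UNIV inner UNIV inner T"
  shows "linear T"
  using assms unfolding riemannian_submersion_on_def by (intro linearI) auto

lemma riemannian_submersion_horizontal_lift:
  assumes "riemannian_submersion_on UNIV inner UNIV inner T"
  obtains v where "T v = y" "\<forall>k. T k = 0 \<longrightarrow> inner v k = 0"
proof -
  have "y \<in> T ` {v. \<forall>k\<in>{k. T k = 0}. inner v k = 0}"
    using assms unfolding riemannian_submersion_on_def Let_def by simp
  then show ?thesis
    using that by blast
qed

lemma riemannian_submersion_isometric_horizontal:
  assumes "riemannian_submersion_on UNIV inner UNIV inner T"
    and "\<forall>k. T k = 0 \<longrightarrow> inner v k = 0" "\<forall>k. T k = 0 \<longrightarrow> inner w k = 0"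
  shows "inner (T v) (T w) = inner v w"
  using assms unfolding riemannian_submersion_on_def Let_def by auto

lemma riemannian_submersion_norm_le:
  assumes "riemannian_submersion_on UNIV inner UNIV inner T"
  shows "norm (T a) \<le> norm a"
proof -
  obtain v where v: "T v = T a" "\<forall>k. T k = 0 \<longrightarrow> inner v k = 0"
    using riemannian_submersion_horizontal_lift[OF assms] by blast
  have "T (a - v) = 0"
    using v(1) linear_diff[OF riemannian_submersion_linear[OF assms]] by simp
  then have orth: "inner v (a - v) = 0"
    using v(2) by blast
  have "(norm (T a))\<^sup>2 = (norm v)\<^sup>2"
    using riemannian_submersion_isometric_horizontal[OF assms v(2) v(2)] v(1)
    by (simp add: power2_norm_eq_inner)
  also have "\<dots> \<le> (norm v)\<^sup>2 + (norm (a - v))\<^sup>2"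
    by simp
  also have "\<dots> = (norm a)\<^sup>2"
    using orth by (simp add: power2_norm_eq_inner inner_diff_left inner_diff_right inner_commute)
  finally show ?thesis
    using power2_le_imp_le by force
qed

definition fiber_product_inner ::
  "('a::real_inner \<Rightarrow> 'x::real_inner) \<Rightarrow> 'a \<times> 'b::real_inner \<Rightarrow> 'a \<times> 'b \<Rightarrow> real" where
  "fiber_product_inner \<alpha> p q =
     inner (fst p) (fst q) + inner (snd p) (snd q) - inner (\<alpha> (fst p)) (\<alpha> (fst q))"

lemma subspace_fiber_product:
  assumes "linear \<alpha>" "linear \<beta>"
  shows "subspace {(a, b). \<alpha> a = \<beta> b}"
  using assms unfolding subspace_def
  by (auto simp: zero_prod_def linear_add linear_scale linear_0)

lemma inner_product_on_fiber_product:
  assumes "linear \<alpha>" "linear \<beta>" and norm_le: "\<And>a. norm (\<alpha> a) \<le> norm a"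
  shows "inner_product_on {(a, b). \<alpha> a = \<beta> b} (fiber_product_inner \<alpha>)"
  unfolding inner_product_on_def
proof (intro conjI ballI allI impI)
  show "subspace {(a, b). \<alpha> a = \<beta> b}"
    using subspace_fiber_product[OF assms(1,2)] .
next
  fix x assume "x \<in> {(a, b). \<alpha> a = \<beta> b}" "x \<noteq> 0"
  then obtain a b where x: "x = (a, b)" "\<alpha> a = \<beta> b" "a \<noteq> 0 \<or> b \<noteq> 0"
    by (auto simp: zero_prod_def)
  have "fiber_product_inner \<alpha> x x = ((norm a)\<^sup>2 - (norm (\<alpha> a))\<^sup>2) + (norm b)\<^sup>2"
    by (simp add: fiber_product_inner_def x power2_norm_eq_inner)
  also have "\<dots> > 0"
  proof (cases "b = 0")
    case True
    then have "\<alpha> a = 0" "a \<noteq> 0"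
      using x(2,3) linear_0[OF assms(2)] by simp_all
    then show ?thesis
      using True by simp
  next
    case False
    have "(norm (\<alpha> a))\<^sup>2 \<le> (norm a)\<^sup>2"
      using norm_le by (simp add: power_mono)
    then show ?thesis
      using False by (simp add: add_nonneg_pos)
  qed
  finally show "fiber_product_inner \<alpha> x x > 0" .
qed (simp_all add: fiber_product_inner_def inner_commute inner_add_left algebra_simps
       linear_add[OF assms(1)] linear_scale[OF assms(1)])

lemma fiber_product_fst_riemannian_submersion:
  assumes "linear \<alpha>" and \<beta>: "riemannian_submersion_on UNIV inner UNIV inner \<beta>"
  shows "riemannian_submersion_on {(a, b). \<alpha> a = \<beta> b} (fiber_product_inner \<alpha>) UNIV inner fst"
proof -
  define C where "C = {(a, b). \<alpha> a = \<beta> b}"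
  define P where "P = {v\<in>C. \<forall>k\<in>{k\<in>C. fst k = 0}. fiber_product_inner \<alpha> v k = 0}"
  have horizontal: "\<forall>k. \<beta> k = 0 \<longrightarrow> inner b k = 0" if "(a, b) \<in> P" for a b
  proof (intro allI impI)
    fix k assume "\<beta> k = 0"
    then have "(0, k) \<in> C"
      by (simp add: C_def linear_0[OF assms(1)])
    then show "inner b k = 0"
      using that by (auto simp: P_def fiber_product_inner_def linear_0[OF assms(1)])
  qed
  have "a \<in> fst ` P" for a
  proof -
    obtain b where b: "\<beta> b = \<alpha> a" "\<forall>k. \<beta> k = 0 \<longrightarrow> inner b k = 0"
      using riemannian_submersion_horizontal_lift[OF \<beta>] by blast
    then have "(a, b) \<in> P"
      by (auto simp: P_def C_def fiber_product_inner_def linear_0[OF assms(1)])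
    then show ?thesis
      by force
  qed
  then have "fst ` P = UNIV"
    by blast
  moreover have "inner (fst v) (fst w) = fiber_product_inner \<alpha> v w" if "v \<in> P" "w \<in> P" for v w
    using that horizontal[of "fst v" "snd v"] horizontal[of "fst w" "snd w"]
      riemannian_submersion_isometric_horizontal[OF \<beta>, of "snd v" "snd w"]
    by (auto simp: P_def C_def fiber_product_inner_def split: prod.splits)
  moreover have "fst ` C = UNIV"
    using \<open>fst ` P = UNIV\<close> by (auto simp: P_def)
  ultimately show ?thesis
    unfolding riemannian_submersion_on_def Let_def C_def[symmetric] P_def[symmetric]
    by simp
qed

lemma fiber_product_snd_riemannian_submersion:
  assumes \<alpha>: "riemannian_submersion_on UNIV inner UNIV inner \<alpha>" and "linear \<beta>"
  shows "riemannian_submersion_on {(a, b). \<alpha> a = \<beta> b} (fiber_product_inner \<alpha>) UNIV inner snd"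
proof -
  have swap_linear: "linear prod.swap"
    by (rule linearI) auto
  have swap_onto: "prod.swap ` {(a, b). \<alpha> a = \<beta> b} = {(b, a). \<beta> b = \<alpha> a}"
    by auto
  have swapped: "riemannian_submersion_on {(a, b). \<alpha> a = \<beta> b}
      (\<lambda>p q. fiber_product_inner \<beta> (prod.swap p) (prod.swap q)) UNIV inner (fst \<circ> prod.swap)"
    using riemannian_submersion_on_comp_linear_onto[OF swap_linear swap_onto
        fiber_product_fst_riemannian_submersion[OF assms(2) \<alpha>]] .
  have same_inner: "\<forall>p\<in>{(a, b). \<alpha> a = \<beta> b}. \<forall>q\<in>{(a, b). \<alpha> a = \<beta> b}.
      fiber_product_inner \<alpha> p q = fiber_product_inner \<beta> (prod.swap p) (prod.swap q)"
    by (auto simp: fiber_product_inner_def)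
  show ?thesis
    using swapped unfolding riemannian_submersion_on_cong[OF same_inner] comp_def fst_swap .
qed

theorem lemma2p6:
  fixes \<alpha> :: "'a::euclidean_space \<Rightarrow> 'x::euclidean_space"
    and \<beta> :: "'b::euclidean_space \<Rightarrow> 'x"
  assumes "riemannian_submersion_on UNIV inner UNIV inner \<alpha>"
    and "riemannian_submersion_on UNIV inner UNIV inner \<beta>"
  shows "\<exists>g. inner_product_on {(a, b). \<alpha> a = \<beta> b} g
           \<and> riemannian_submersion_on {(a, b). \<alpha> a = \<beta> b} g UNIV inner fst
           \<and> riemannian_submersion_on {(a, b). \<alpha> a = \<beta> b} g UNIV inner snd"
proof (intro exI conjI)
  have "linear \<alpha>" "linear \<beta>"
    using assms by (simp_all add: riemannian_submersion_linear)
  then show "inner_product_on {(a, b). \<alpha> a = \<beta> b} (fiber_product_inner \<alpha>)"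
    by (rule inner_product_on_fiber_product) (rule riemannian_submersion_norm_le[OF assms(1)])
  show "riemannian_submersion_on {(a, b). \<alpha> a = \<beta> b} (fiber_product_inner \<alpha>) UNIV inner fst"
    using fiber_product_fst_riemannian_submersion[OF \<open>linear \<alpha>\<close> assms(2)] .
  show "riemannian_submersion_on {(a, b). \<alpha> a = \<beta> b} (fiber_product_inner \<alpha>) UNIV inner snd"
    using fiber_product_snd_riemannian_submersion[OF assms(1) \<open>linear \<beta>\<close>] .
qed

end
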